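(* Let $Q$ be a finite quandle and let $D$ be a diagram of a knot $K$ with $\mathrm{col}_Q(D)>0$. Then there is a finite simple quandle $Q'$ with $|Q'|\le |Q|$ such that $\mathrm{col}_{Q'}(D)>0$.
   Context: A quandle is a set $C$ with a binary operation $*$ such that for all $a,b,c\in C$: (1) $a*a=a$; (2) for all $a,b$ there is a unique $x$ with $a*x=b$; (3) $a*(b*c)=(a*b)*(a*c)$. A quandle is simple if it has at least two elements and its only congruences (equivalence relations compatible with $*$) are the identity relation and the total relation; equivalently, it has no homomorphic images other than itself (up to isomorphism) and the one-element quandle. A knot diagram is a regular planar projection of an oriented tame knot, with over/under information recorded at each crossing. Arcs are the maximal unbroken pieces of the projection. At each crossing, $\alpha$ denotes the over-arc, $\beta$ the under-arc on the right of the oriented $\alpha$, and $\gamma$ the under-arc on its left. A $Q$-coloring of $D$ is a map $f$ from arcs to $Q$ with $f(\alpha)*f(\beta)=f(\gamma)$ at every crossing. It is trivial if it uses only one color. $\mathrm{col}_Q(D)$ is the number of non-trivial $Q$-colorings of $D$. *)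

theory Defs
  imports "HOL-Library.FuncSet"
begin

definition quandle :: "'a set \<Rightarrow> ('a \<Rightarrow> 'a \<Rightarrow> 'a) \<Rightarrow> bool" where
  "quandle C m \<longleftrightarrow>
     (\<forall>a\<in>C. \<forall>b\<in>C. m a b \<in> C) \<and>
     (\<forall>a\<in>C. m a a = a) \<and>
     (\<forall>a\<in>C. \<forall>b\<in>C. \<exists>!x. x \<in> C \<and> m a x = b) \<and>
     (\<forall>a\<in>C. \<forall>b\<in>C. \<forall>c\<in>C. m a (m b c) = m (m a b) (m a c))"

definition quandle_congruence :: "'a set \<Rightarrow> ('a \<Rightarrow> 'a \<Rightarrow> 'a) \<Rightarrow> ('a \<times> 'a) set \<Rightarrow> bool" where
  "quandle_congruence C m R \<longleftrightarrow> equiv C R \<and>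
     (\<forall>a\<in>C. \<forall>b\<in>C. \<forall>c\<in>C. \<forall>d\<in>C. (a, b) \<in> R \<and> (c, d) \<in> R \<longrightarrow> (m a c, m b d) \<in> R)"

definition simple_quandle :: "'a set \<Rightarrow> ('a \<Rightarrow> 'a \<Rightarrow> 'a) \<Rightarrow> bool" where
  "simple_quandle C m \<longleftrightarrow> quandle C m \<and> (\<exists>a\<in>C. \<exists>b\<in>C. a \<noteq> b) \<and>
     (\<forall>R. quandle_congruence C m R \<longrightarrow> R = Id_on C \<or> R = C \<times> C)"

text \<open>A knot diagram with n crossings is encoded by walking along the oriented knot:
  the arcs are numbered 0,...,n-1 in order of traversal (a diagram without crossings has the
  single arc 0); at the k-th undercrossing the knot passes from arc k to arc (k+1) mod n,
  under the over-arc ov k.  The boolean s k records on which side of the oriented over-arc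
  the incoming under-arc lies: if s k then beta = k and gamma = (k+1) mod n, otherwise
  beta = (k+1) mod n and gamma = k.\<close>

record diagram =
  ncross :: nat
  ov :: "nat \<Rightarrow> nat"
  sd :: "nat \<Rightarrow> bool"

definition arcs :: "diagram \<Rightarrow> nat set" where
  "arcs D = {..<max 1 (ncross D)}"

definition wf_diagram :: "diagram \<Rightarrow> bool" where
  "wf_diagram D \<longleftrightarrow> (\<forall>k<ncross D. ov D k < ncross D)"

definition cr_beta :: "diagram \<Rightarrow> nat \<Rightarrow> nat" where
  "cr_beta D k = (if sd D k then k else Suc k mod ncross D)"

definition cr_gamma :: "diagram \<Rightarrow> nat \<Rightarrow> nat" where
  "cr_gamma D k = (if sd D k then Suc k mod ncross D else k)"

definition is_coloring :: "'a set \<Rightarrow> ('a \<Rightarrow> 'a \<Rightarrow> 'a) \<Rightarrow> diagram \<Rightarrow> (nat \<Rightarrow> 'a) \<Rightarrow> bool" where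
  "is_coloring C m D f \<longleftrightarrow> f \<in> arcs D \<rightarrow>\<^sub>E C \<and>
     (\<forall>k<ncross D. m (f (ov D k)) (f (cr_beta D k)) = f (cr_gamma D k))"

definition nontrivial_coloring :: "diagram \<Rightarrow> (nat \<Rightarrow> 'a) \<Rightarrow> bool" where
  "nontrivial_coloring D f \<longleftrightarrow> (\<exists>i\<in>arcs D. \<exists>j\<in>arcs D. f i \<noteq> f j)"

definition col :: "'a set \<Rightarrow> ('a \<Rightarrow> 'a \<Rightarrow> 'a) \<Rightarrow> diagram \<Rightarrow> nat" where
  "col C m D = card {f. is_coloring C m D f \<and> nontrivial_coloring D f}"

end

theory Submission
  imports Defs
begin

text \<open>Induction on the size of the quandle. If the quandle Q is not simple, it has a congruence R
  other than equality and the total relation. Either the coloring stays nontrivial after passing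
  to the quotient Q/R, which is smaller because R is not equality; or all colors lie in one class
  of R, and that class is a subquandle, smaller because R is not total. In both cases a strictly
  smaller quandle colors D nontrivially. Being a quandle passes to homomorphic images of finite
  quandles, which covers both the quotient and the relabelling of carriers by natural numbers.\<close>

lemma quandle_closed: "quandle C m \<Longrightarrow> a \<in> C \<Longrightarrow> b \<in> C \<Longrightarrow> m a b \<in> C"
  unfolding quandle_def by blast

lemma quandle_idem: "quandle C m \<Longrightarrow> a \<in> C \<Longrightarrow> m a a = a"
  unfolding quandle_def by blast

lemma quandle_solvable:
  assumes "quandle C m" "a \<in> C" "b \<in> C"
  shows "\<exists>x\<in>C. m a x = b"
proof -
  have "\<forall>a\<in>C. \<forall>b\<in>C. \<exists>!x. x \<in> C \<and> m a x = b" using assms(1) unfolding quandle_def by (elim conjE)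
  then show ?thesis using assms(2,3) by blast
qed

lemma quandle_distrib:
  assumes "quandle C m" "a \<in> C" "b \<in> C" "c \<in> C"
  shows "m a (m b c) = m (m a b) (m a c)"
proof -
  have "\<forall>a\<in>C. \<forall>b\<in>C. \<forall>c\<in>C. m a (m b c) = m (m a b) (m a c)"
    using assms(1) unfolding quandle_def by (elim conjE)
  then show ?thesis using assms(2-4) by blast
qed

lemma quandle_inj_on_left:
  assumes "quandle C m" "a \<in> C"
  shows "inj_on (m a) C"
proof (rule inj_onI)
  fix x y assume "x \<in> C" "y \<in> C" "m a x = m a y"
  have "m a x \<in> C" using quandle_closed[OF assms \<open>x \<in> C\<close>] .
  then have "\<exists>!z. z \<in> C \<and> m a z = m a x" using assms unfolding quandle_def by blast
  with \<open>x \<in> C\<close> \<open>y \<in> C\<close> \<open>m a x = m a y\<close> show "x = y" by metis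
qed

lemma subquandleI:
  assumes "quandle C m" "S \<subseteq> C"
    and closed: "\<And>a b. a \<in> S \<Longrightarrow> b \<in> S \<Longrightarrow> m a b \<in> S"
    and solvable: "\<And>a b. a \<in> S \<Longrightarrow> b \<in> S \<Longrightarrow> \<exists>x\<in>S. m a x = b"
  shows "quandle S m"
  unfolding quandle_def
proof (intro conjI ballI)
  fix a b assume "a \<in> S" "b \<in> S"
  then obtain x where "x \<in> S" "m a x = b" using solvable by blast
  moreover have "inj_on (m a) S"
    using quandle_inj_on_left[OF assms(1)] \<open>a \<in> S\<close> \<open>S \<subseteq> C\<close> inj_on_subset by blast
  ultimately show "\<exists>!x. x \<in> S \<and> m a x = b" unfolding inj_on_def by blast
next
  fix a assume "a \<in> S"
  then show "m a a = a" using quandle_idem[OF assms(1)] \<open>S \<subseteq> C\<close> by blast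
next
  fix a b c assume "a \<in> S" "b \<in> S" "c \<in> S"
  then show "m a (m b c) = m (m a b) (m a c)" using quandle_distrib[OF assms(1)] \<open>S \<subseteq> C\<close> by blast
qed (rule closed)

definition quandle_hom :: "'a set \<Rightarrow> ('a \<Rightarrow> 'a \<Rightarrow> 'a) \<Rightarrow> ('b \<Rightarrow> 'b \<Rightarrow> 'b) \<Rightarrow> ('a \<Rightarrow> 'b) \<Rightarrow> bool" where
  "quandle_hom C m m' \<phi> \<longleftrightarrow> (\<forall>a\<in>C. \<forall>b\<in>C. \<phi> (m a b) = m' (\<phi> a) (\<phi> b))"

text \<open>Homomorphic images only inherit solvability of a * x = b; uniqueness comes from finiteness,
  since a surjective self-map of a finite set is injective.\<close>

lemma quandle_hom_image:
  assumes q: "quandle C m" and "finite C" and hom: "quandle_hom C m m' \<phi>"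
  shows "quandle (\<phi> ` C) m'"
proof -
  have hom_eq: "m' (\<phi> a) (\<phi> b) = \<phi> (m a b)" if "a \<in> C" "b \<in> C" for a b
    using hom that unfolding quandle_hom_def by simp
  show ?thesis
    unfolding quandle_def
  proof (intro conjI ballI)
    fix a' b' assume "a' \<in> \<phi> ` C" "b' \<in> \<phi> ` C"
    then obtain a b where ab: "a \<in> C" "b \<in> C" "a' = \<phi> a" "b' = \<phi> b" by blast
    show "m' a' b' \<in> \<phi> ` C"
      using ab hom_eq quandle_closed[OF q] by simp
    have onto: "\<phi> ` C \<subseteq> m' a' ` \<phi> ` C"
    proof
      fix c' assume "c' \<in> \<phi> ` C"
      then obtain c where "c \<in> C" "c' = \<phi> c" by blast
      then obtain x where "x \<in> C" "m a x = c" using quandle_solvable[OF q \<open>a \<in> C\<close>] by blast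
      then have "c' = m' a' (\<phi> x)" using ab(1,3) hom_eq \<open>c' = \<phi> c\<close> by simp
      then show "c' \<in> m' a' ` \<phi> ` C" using \<open>x \<in> C\<close> by blast
    qed
    then have inj: "inj_on (m' a') (\<phi> ` C)" by (rule finite_surj_inj[OF finite_imageI[OF \<open>finite C\<close>]])
    have "b' \<in> m' a' ` \<phi> ` C" using onto \<open>b' \<in> \<phi> ` C\<close> by (rule subsetD)
    then obtain x' where x': "b' = m' a' x'" "x' \<in> \<phi> ` C" by (rule imageE)
    show "\<exists>!x. x \<in> \<phi> ` C \<and> m' a' x = b'"
    proof (rule ex1I[of _ x'])
      fix y assume "y \<in> \<phi> ` C \<and> m' a' y = b'"
      then show "y = x'" using inj x' inj_onD by metis
    qed (use x' in simp)
  next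
    fix a' assume "a' \<in> \<phi> ` C"
    then show "m' a' a' = a'" using hom_eq quandle_idem[OF q] by auto
  next
    fix a' b' c' assume "a' \<in> \<phi> ` C" "b' \<in> \<phi> ` C" "c' \<in> \<phi> ` C"
    then obtain a b c where abc: "a \<in> C" "b \<in> C" "c \<in> C" and "a' = \<phi> a" "b' = \<phi> b" "c' = \<phi> c"
      by blast
    then show "m' a' (m' b' c') = m' (m' a' b') (m' a' c')"
      using hom_eq quandle_distrib[OF q abc] quandle_closed[OF q] by simp
  qed
qed

definition colorable :: "'a set \<Rightarrow> ('a \<Rightarrow> 'a \<Rightarrow> 'a) \<Rightarrow> diagram \<Rightarrow> bool" where
  "colorable C m D \<longleftrightarrow> (\<exists>f. is_coloring C m D f \<and> nontrivial_coloring D f)"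

lemma col_gt_0_iff_colorable:
  assumes "finite C"
  shows "col C m D > 0 \<longleftrightarrow> colorable C m D"
proof -
  have "finite (arcs D \<rightarrow>\<^sub>E C)" using assms by (simp add: arcs_def finite_PiE)
  then have "finite {f. is_coloring C m D f \<and> nontrivial_coloring D f}"
    by (rule rev_finite_subset) (auto simp: is_coloring_def)
  then show ?thesis unfolding col_def colorable_def by (auto simp: card_gt_0_iff)
qed

lemma crossing_arcs:
  assumes "wf_diagram D" "k < ncross D"
  shows "ov D k \<in> arcs D" "cr_beta D k \<in> arcs D" "cr_gamma D k \<in> arcs D"
  using assms by (auto simp: arcs_def wf_diagram_def cr_beta_def cr_gamma_def)

lemma coloring_in_carrier: "is_coloring C m D f \<Longrightarrow> i \<in> arcs D \<Longrightarrow> f i \<in> C"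
  unfolding is_coloring_def by auto

lemma colorable_hom_image:
  assumes "wf_diagram D" and hom: "quandle_hom C m m' \<phi>" and f: "is_coloring C m D f"
    and "i \<in> arcs D" "j \<in> arcs D" "\<phi> (f i) \<noteq> \<phi> (f j)"
  shows "colorable (\<phi> ` C) m' D"
proof -
  let ?f' = "restrict (\<phi> \<circ> f) (arcs D)"
  have "is_coloring (\<phi> ` C) m' D ?f'"
    unfolding is_coloring_def
  proof (intro conjI allI impI)
    show "?f' \<in> arcs D \<rightarrow>\<^sub>E \<phi> ` C" using coloring_in_carrier[OF f] by auto
  next
    fix k assume "k < ncross D"
    note arcs = crossing_arcs[OF \<open>wf_diagram D\<close> this]
    have "m (f (ov D k)) (f (cr_beta D k)) = f (cr_gamma D k)"
      using f \<open>k < ncross D\<close> unfolding is_coloring_def by blast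
    moreover have "\<phi> (m (f (ov D k)) (f (cr_beta D k))) = m' (\<phi> (f (ov D k))) (\<phi> (f (cr_beta D k)))"
      using arcs hom coloring_in_carrier[OF f] unfolding quandle_hom_def by blast
    ultimately show "m' (?f' (ov D k)) (?f' (cr_beta D k)) = ?f' (cr_gamma D k)"
      using arcs by simp
  qed
  moreover have "nontrivial_coloring D ?f'"
    using assms(4-6) unfolding nontrivial_coloring_def by auto
  ultimately show ?thesis unfolding colorable_def by blast
qed

lemma colorable_subset:
  assumes f: "is_coloring C m D f" "nontrivial_coloring D f" and "f ` arcs D \<subseteq> S"
  shows "colorable S m D"
  using assms unfolding colorable_def is_coloring_def by auto

lemma colorable_two_elements:
  assumes "colorable C m D"
  shows "\<exists>a\<in>C. \<exists>b\<in>C. a \<noteq> b"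
  using assms coloring_in_carrier unfolding colorable_def nontrivial_coloring_def by metis

lemma colorable_transfer_nat:
  assumes "wf_diagram D" "quandle C m" "finite C" "colorable C m D"
  shows "\<exists>(C' :: nat set) m'. finite C' \<and> card C' = card C \<and> quandle C' m' \<and> colorable C' m' D"
proof -
  obtain g where g: "bij_betw g C {0..<card C}" using ex_bij_betw_finite_nat[OF \<open>finite C\<close>] by blast
  define m' where "m' a b = g (m (inv_into C g a) (inv_into C g b))" for a b
  have inj: "inj_on g C" and img: "g ` C = {0..<card C}" using g unfolding bij_betw_def by auto
  have hom: "quandle_hom C m m' g"
    unfolding quandle_hom_def m'_def using inj by simp
  obtain f i j where f: "is_coloring C m D f" and ij: "i \<in> arcs D" "j \<in> arcs D" "f i \<noteq> f j"
    using \<open>colorable C m D\<close> unfolding colorable_def nontrivial_coloring_def by blast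
  then have "g (f i) \<noteq> g (f j)" using inj coloring_in_carrier[OF f] unfolding inj_on_def by blast
  then have "colorable (g ` C) m' D" using colorable_hom_image[OF assms(1) hom f ij(1,2)] by blast
  moreover have "quandle (g ` C) m'" using quandle_hom_image[OF assms(2,3) hom] .
  ultimately show ?thesis using img by (intro exI[of _ "g ` C"] exI[of _ m']) auto
qed

lemma quandle_congruence_subset: "quandle_congruence C m R \<Longrightarrow> R \<subseteq> C \<times> C"
  unfolding quandle_congruence_def equiv_def refl_on_def by blast

lemma quandle_congruence_compat:
  "quandle_congruence C m R \<Longrightarrow> (a, b) \<in> R \<Longrightarrow> (c, d) \<in> R \<Longrightarrow> (m a c, m b d) \<in> R"
  using quandle_congruence_subset unfolding quandle_congruence_def by blast

text \<open>Left multiplication by a maps R injectively into itself, hence onto R when C is finite.\<close>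

lemma quandle_congruence_cancel:
  assumes q: "quandle C m" and "finite C" and R: "quandle_congruence C m R"
    and "a \<in> C" "x \<in> C" "y \<in> C" and "(m a x, m a y) \<in> R"
  shows "(x, y) \<in> R"
proof -
  have sub: "R \<subseteq> C \<times> C" using quandle_congruence_subset[OF R] .
  have "(a, a) \<in> R" using R \<open>a \<in> C\<close> unfolding quandle_congruence_def equiv_def refl_on_def by blast
  let ?P = "map_prod (m a) (m a)"
  have inj: "inj_on ?P R"
  proof (rule inj_onI)
    fix p p' assume "p \<in> R" "p' \<in> R" "?P p = ?P p'"
    then show "p = p'"
      using sub quandle_inj_on_left[OF q \<open>a \<in> C\<close>] unfolding inj_on_def by (cases p; cases p') auto
  qed
  have "?P ` R \<subseteq> R"
    using quandle_congruence_compat[OF R \<open>(a, a) \<in> R\<close>] by auto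
  then have "?P ` R = R"
    using endo_inj_surj[OF finite_subset[OF sub] _ inj] \<open>finite C\<close> by blast
  then obtain u v where "(u, v) \<in> R" "m a u = m a x" "m a v = m a y"
    using \<open>(m a x, m a y) \<in> R\<close> by force
  with sub \<open>x \<in> C\<close> \<open>y \<in> C\<close> quandle_inj_on_left[OF q \<open>a \<in> C\<close>] show ?thesis
    unfolding inj_on_def by blast
qed

lemma quandle_congruence_class:
  assumes q: "quandle C m" and "finite C" and R: "quandle_congruence C m R" and "c \<in> C"
  shows "quandle (R `` {c}) m"
proof -
  obtain rfl: "refl_on C R" and sy: "sym R" and tr: "trans R"
    using R unfolding quandle_congruence_def by (blast elim: equivE)
  have sub: "R `` {c} \<subseteq> C" using quandle_congruence_subset[OF R] by blast
  show ?thesis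
  proof (rule subquandleI[OF q sub])
    fix a b assume a: "a \<in> R `` {c}" and b: "b \<in> R `` {c}"
    then have aC: "a \<in> C" and ca: "(c, a) \<in> R" and cb: "(c, b) \<in> R" using sub by blast+
    have ab: "(a, b) \<in> R" using transD[OF tr symD[OF sy ca] cb] .
    have "(m a a, m a b) \<in> R" using quandle_congruence_compat[OF R refl_onD[OF rfl aC] ab] .
    then have "(c, m a b) \<in> R" using transD[OF tr ca] quandle_idem[OF q aC] by simp
    then show "m a b \<in> R `` {c}" by blast
    obtain x where x: "x \<in> C" "m a x = b" using quandle_solvable[OF q aC] b sub by blast
    then have "(m a a, m a x) \<in> R" using ab quandle_idem[OF q aC] by simp
    then have "(a, x) \<in> R" using quandle_congruence_cancel[OF q \<open>finite C\<close> R aC aC x(1)] by blast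
    then show "\<exists>x\<in>R `` {c}. m a x = b" using transD[OF tr ca] x(2) by blast
  qed
qed

definition quotient_op :: "('a \<times> 'a) set \<Rightarrow> ('a \<Rightarrow> 'a \<Rightarrow> 'a) \<Rightarrow> 'a set \<Rightarrow> 'a set \<Rightarrow> 'a set" where
  "quotient_op R m X Y = R `` {m (SOME x. x \<in> X) (SOME y. y \<in> Y)}"

lemma quandle_hom_quotient:
  assumes R: "quandle_congruence C m R"
  shows "quandle_hom C m (quotient_op R m) (\<lambda>a. R `` {a})"
  unfolding quandle_hom_def
proof (intro ballI)
  fix a b assume "a \<in> C" "b \<in> C"
  have eq: "equiv C R" using R unfolding quandle_congruence_def by blast
  define x where "x = (SOME x. x \<in> R `` {a})"
  define y where "y = (SOME y. y \<in> R `` {b})"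
  have "x \<in> R `` {a}" unfolding x_def by (rule someI, rule equiv_class_self[OF eq \<open>a \<in> C\<close>])
  moreover have "y \<in> R `` {b}" unfolding y_def by (rule someI, rule equiv_class_self[OF eq \<open>b \<in> C\<close>])
  ultimately have "(m a b, m x y) \<in> R" using quandle_congruence_compat[OF R] by blast
  then show "R `` {m a b} = quotient_op R m (R `` {a}) (R `` {b})"
    unfolding quotient_op_def x_def[symmetric] y_def[symmetric] by (rule equiv_class_eq[OF eq])
qed

lemma colorable_nat_smaller:
  assumes "wf_diagram D" "quandle C m" "finite C" "colorable C m D" "card C < n"
  shows "\<exists>(C' :: nat set) m'. finite C' \<and> card C' < n \<and> quandle C' m' \<and> colorable C' m' D"
proof -
  obtain C' :: "nat set" and m' where "finite C'" "card C' = card C" "quandle C' m'" "colorable C' m' D"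
    using colorable_transfer_nat[OF assms(1-4)] by blast
  then show ?thesis using assms(5) by (intro exI[of _ C'] exI[of _ m']) simp
qed

lemma colorable_quotient_smaller:
  assumes "wf_diagram D" and q: "quandle C m" and "finite C"
    and R: "quandle_congruence C m R" "R \<noteq> Id_on C"
    and f: "is_coloring C m D f" and ij: "i \<in> arcs D" "j \<in> arcs D" "(f i, f j) \<notin> R"
  shows "\<exists>(C' :: nat set) m'. finite C' \<and> card C' < card C \<and> quandle C' m' \<and> colorable C' m' D"
proof -
  let ?cls = "\<lambda>a. R `` {a}"
  have eq: "equiv C R" using R unfolding quandle_congruence_def by blast
  note hom = quandle_hom_quotient[OF R(1)]
  have "\<not> inj_on ?cls C"
  proof
    assume inj: "inj_on ?cls C"
    have "R \<subseteq> Id_on C"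
    proof
      fix p assume "p \<in> R"
      then obtain x y where "p = (x, y)" "x \<in> C" "y \<in> C" "(x, y) \<in> R"
        using quandle_congruence_subset[OF R(1)] by blast
      moreover from this have "x = y" using eq_equiv_class_iff[OF eq] inj_onD[OF inj] by simp
      ultimately show "p \<in> Id_on C" by auto
    qed
    moreover have "Id_on C \<subseteq> R" using eq unfolding equiv_def refl_on_def by blast
    ultimately show False using \<open>R \<noteq> Id_on C\<close> by blast
  qed
  then have "card (?cls ` C) < card C"
    using inj_on_iff_eq_card[OF \<open>finite C\<close>] card_image_le[OF \<open>finite C\<close>] le_neq_implies_less by metis
  moreover have "?cls (f i) \<noteq> ?cls (f j)"
    using eq_equiv_class_iff[OF eq coloring_in_carrier[OF f ij(1)] coloring_in_carrier[OF f ij(2)]] ij(3)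
    by simp
  then have "colorable (?cls ` C) (quotient_op R m) D"
    by (rule colorable_hom_image[OF assms(1) hom f ij(1,2)])
  ultimately show ?thesis
    using colorable_nat_smaller[OF assms(1) quandle_hom_image[OF q \<open>finite C\<close> hom] finite_imageI[OF \<open>finite C\<close>]]
    by blast
qed

lemma colorable_class_smaller:
  assumes "wf_diagram D" and q: "quandle C m" and "finite C"
    and R: "quandle_congruence C m R" "R \<noteq> C \<times> C"
    and f: "is_coloring C m D f" "nontrivial_coloring D f"
    and related: "\<forall>i\<in>arcs D. \<forall>j\<in>arcs D. (f i, f j) \<in> R"
  shows "\<exists>(C' :: nat set) m'. finite C' \<and> card C' < card C \<and> quandle C' m' \<and> colorable C' m' D"
proof -
  let ?S = "R `` {f 0}"
  have eq: "equiv C R" using R unfolding quandle_congruence_def by blast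
  have "0 \<in> arcs D" by (simp add: arcs_def)
  then have "f ` arcs D \<subseteq> ?S" using related by blast
  have "?S \<subseteq> C" using quandle_congruence_subset[OF R(1)] by blast
  moreover have "?S \<noteq> C"
  proof
    assume "?S = C"
    then have "C \<times> C \<subseteq> R" using eq unfolding equiv_def sym_def trans_def by blast
    then show False using \<open>R \<noteq> C \<times> C\<close> quandle_congruence_subset[OF R(1)] by blast
  qed
  ultimately have "card ?S < card C" using \<open>finite C\<close> by (simp add: psubset_card_mono)
  moreover have "finite ?S" using \<open>?S \<subseteq> C\<close> \<open>finite C\<close> by (rule finite_subset)
  moreover have "quandle ?S m"
    using quandle_congruence_class[OF q \<open>finite C\<close> R(1) coloring_in_carrier[OF f(1) \<open>0 \<in> arcs D\<close>]] .
  ultimately show ?thesis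
    using colorable_nat_smaller[OF assms(1)] colorable_subset[OF f \<open>f ` arcs D \<subseteq> ?S\<close>] by blast
qed

lemma colorable_smaller_if_not_simple:
  assumes "wf_diagram D" and q: "quandle C m" and "finite C" and col: "colorable C m D"
    and "\<not> simple_quandle C m"
  shows "\<exists>(C' :: nat set) m'. finite C' \<and> card C' < card C \<and> quandle C' m' \<and> colorable C' m' D"
proof -
  obtain R where R: "quandle_congruence C m R" "R \<noteq> Id_on C" "R \<noteq> C \<times> C"
    using assms(5) q colorable_two_elements[OF col] unfolding simple_quandle_def by blast
  obtain f where f: "is_coloring C m D f" "nontrivial_coloring D f"
    using col unfolding colorable_def by blast
  show ?thesis
  proof (cases "\<forall>i\<in>arcs D. \<forall>j\<in>arcs D. (f i, f j) \<in> R")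
    case True
    then show ?thesis using colorable_class_smaller[OF assms(1-3) R(1,3) f] by blast
  next
    case False
    then obtain i j where "i \<in> arcs D" "j \<in> arcs D" "(f i, f j) \<notin> R" by blast
    then show ?thesis using colorable_quotient_smaller[OF assms(1-3) R(1,2) f(1)] by blast
  qed
qed

lemma colorable_simple_below:
  assumes "wf_diagram D"
  shows "finite (C :: nat set) \<Longrightarrow> quandle C m \<Longrightarrow> colorable C m D \<Longrightarrow>
    \<exists>(Q' :: nat set) m'. finite Q' \<and> simple_quandle Q' m' \<and> card Q' \<le> card C \<and> colorable Q' m' D"
proof (induction "card C" arbitrary: C m rule: less_induct)
  case less
  show ?case
  proof (cases "simple_quandle C m")
    case True
    then show ?thesis using less.prems by blast
  next
    case False
    then obtain C' :: "nat set" and m' where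
      "finite C'" "card C' < card C" "quandle C' m'" "colorable C' m' D"
      using colorable_smaller_if_not_simple[OF assms less.prems(2,1,3)] by blast
    then show ?thesis using less.hyps by (meson order.strict_implies_order order_trans)
  qed
qed

theorem lemma2:
  fixes Q :: "'a set" and m :: "'a \<Rightarrow> 'a \<Rightarrow> 'a" and D :: diagram
  assumes "quandle Q m" and "finite Q"
    and "wf_diagram D"
    and "col Q m D > 0"
  shows "\<exists>(Q' :: nat set) m'. finite Q' \<and> simple_quandle Q' m' \<and> card Q' \<le> card Q \<and> col Q' m' D > 0"
proof -
  have "colorable Q m D" using assms(2,4) col_gt_0_iff_colorable by blast
  then obtain C :: "nat set" and m' where C: "finite C" "card C = card Q" "quandle C m'" "colorable C m' D"
    using colorable_transfer_nat[OF assms(3,1,2)] by blast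
  then show ?thesis
    using colorable_simple_below[OF assms(3) C(1,3,4)] col_gt_0_iff_colorable by metis
qed

end
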